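(* Fix integers $d\ge 2$ and $k\ge 1$. For a pure qudit input $\psi=\sum_{i,j=1}^d\beta_i\overline{\beta}_j\,|i\rangle\langle j|$ (with $\sum_i|\beta_i|^2=1$), let $$\sigma^{(k)}_B=\sum_{\vec n\in N(k-1)}|v_{\vec n}\rangle\langle v_{\vec n}|,\qquad |v_{\vec n}\rangle=\sum_{i=1}^d\beta_i\sqrt{1+n_i}\,|(n_1,\dots,1+n_i,\dots,n_d)\rangle_B ,$$ be the $k$-th block of the output of the qudit Unruh channel, and let $\mathcal{B}_k$ be the map obtained by normalizing this block to unit trace (normalization constant $\binom{k+d-1}{d}$) and extending linearly to all qudit density operators. Then $\mathcal{B}_k$ is equivalent to (i.e. is the same completely positive trace-preserving map as) the $1\to k$ universal qudit cloning channel $Cl^{(d)}_{1\to k}$, under the identification of the $d$-mode, $k$-photon Fock states $|(m_1,\dots,m_d)\rangle$ with the completely symmetric $k$-qudit states $|\vec m\rangle$.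
   Context: Notation: $N(m)=\{\vec n=(n_1,\dots,n_d)\in\mathbb{Z}_{\ge 0}^d:\sum_i n_i=m\}$; $|(n_1,\dots,n_d)\rangle$ denotes the $d$-mode photonic Fock state with $n_i$ photons in mode $i$. The qudit Unruh channel with parameter $z=\tanh^2 r\in[0,1)$ maps a single-excitation qudit state $\sum_i\beta_i|(0,\dots,1_i,\dots,0)\rangle$ to $\sigma_B=(1-z)^{d+1}\bigoplus_{k\ge1}z^{k-1}\sigma_B^{(k)}$ with $\sigma_B^{(k)}$ as in the claim, extended linearly. The $1\to k$ universal qudit cloner is the isometry acting on basis states $|i\rangle$ ($1\le i\le d$, identified with $\vec e_i$) by $|\vec e_i\rangle\otimes R\mapsto\sum_{\vec j\in N(k-1)}\alpha_{\vec e_i,\vec j}\,|\vec e_i+\vec j\rangle\otimes R_{\vec j}$, where $|\vec m\rangle$ denotes the normalized completely symmetric $k$-qudit state with $m_l$ qudits in state $|l\rangle$, the auxiliary states $R_{\vec j}$ are orthonormal, and $\alpha_{\vec n,\vec j}=\sqrt{\frac{(k-1)!\,d!}{(k+d-1)!}}\sqrt{\prod_{l=1}^d\frac{(n_l+j_l)!}{n_l!\,j_l!}}$. The universal cloning channel $Cl^{(d)}_{1\to k}$ is obtained by applying this isometry and tracing out the auxiliary system. *)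

theory Defs
  imports Complex_Main
begin

text \<open>Modes / qudit basis states are indexed 0..d-1 (the paper uses 1..d).
  Occupation vectors are functions nat => nat vanishing outside {0..<d}.\<close>

definition occ :: "nat \<Rightarrow> nat \<Rightarrow> (nat \<Rightarrow> nat) set" where
  "occ d m = {n. (\<forall>l\<ge>d. n l = 0) \<and> (\<Sum>l<d. n l) = m}"

definition unit_occ :: "nat \<Rightarrow> nat \<Rightarrow> nat" where
  "unit_occ i = (\<lambda>l. if l = i then 1 else 0)"

definition add_occ :: "(nat \<Rightarrow> nat) \<Rightarrow> (nat \<Rightarrow> nat) \<Rightarrow> nat \<Rightarrow> nat" where
  "add_occ n j = (\<lambda>l. n l + j l)"

definition density_op :: "nat \<Rightarrow> (nat \<Rightarrow> nat \<Rightarrow> complex) \<Rightarrow> bool" where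
  "density_op d \<rho> \<longleftrightarrow>
     (\<forall>i<d. \<forall>j<d. \<rho> j i = cnj (\<rho> i j)) \<and>
     (\<forall>x :: nat \<Rightarrow> complex. Re (\<Sum>i<d. \<Sum>j<d. cnj (x i) * \<rho> i j * x j) \<ge> 0) \<and>
     (\<Sum>i<d. \<rho> i i) = 1"

definition vvec :: "nat \<Rightarrow> (nat \<Rightarrow> complex) \<Rightarrow> (nat \<Rightarrow> nat) \<Rightarrow> (nat \<Rightarrow> nat) \<Rightarrow> complex" where
  "vvec d \<beta> n m = (\<Sum>i<d. if m = add_occ n (unit_occ i)
                            then \<beta> i * complex_of_real (sqrt (real (1 + n i))) else 0)"

definition sigmaB :: "nat \<Rightarrow> nat \<Rightarrow> (nat \<Rightarrow> complex) \<Rightarrow> (nat \<Rightarrow> nat) \<Rightarrow> (nat \<Rightarrow> nat) \<Rightarrow> complex" where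
  "sigmaB d k \<beta> m m' = (\<Sum>n\<in>occ d (k - 1). vvec d \<beta> n m * cnj (vvec d \<beta> n m'))"

text \<open>The map B_k: the normalized block, extended linearly (beta_i conj(beta_j) replaced by rho_ij).\<close>
definition Bk :: "nat \<Rightarrow> nat \<Rightarrow> (nat \<Rightarrow> nat \<Rightarrow> complex) \<Rightarrow> (nat \<Rightarrow> nat) \<Rightarrow> (nat \<Rightarrow> nat) \<Rightarrow> complex" where
  "Bk d k \<rho> m m' = (1 / of_nat ((k + d - 1) choose d)) *
     (\<Sum>n\<in>occ d (k - 1). \<Sum>i<d. \<Sum>j<d.
        (if m = add_occ n (unit_occ i) \<and> m' = add_occ n (unit_occ j)
         then \<rho> i j * complex_of_real (sqrt (real (1 + n i)) * sqrt (real (1 + n j)))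
         else 0))"

definition alpha :: "nat \<Rightarrow> nat \<Rightarrow> (nat \<Rightarrow> nat) \<Rightarrow> (nat \<Rightarrow> nat) \<Rightarrow> real" where
  "alpha d k n j = sqrt (fact (k - 1) * fact d / fact (k + d - 1)) *
     sqrt (\<Prod>l\<in>{0..<d}. fact (n l + j l) / (fact (n l) * fact (j l)))"

text \<open>The cloning isometry V: matrix entry <m| <R_j| V |i>, with m in N(k) labelling
  symmetric k-qudit states, j in N(k-1) labelling the orthonormal auxiliary states.\<close>
definition clone_iso :: "nat \<Rightarrow> nat \<Rightarrow> (nat \<Rightarrow> nat) \<Rightarrow> (nat \<Rightarrow> nat) \<Rightarrow> nat \<Rightarrow> complex" where
  "clone_iso d k m j i = (if m = add_occ (unit_occ i) j
                          then complex_of_real (alpha d k (unit_occ i) j) else 0)"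

text \<open>Cl_{1->k}(rho) = Tr_R (V rho V^dagger).\<close>
definition Cl :: "nat \<Rightarrow> nat \<Rightarrow> (nat \<Rightarrow> nat \<Rightarrow> complex) \<Rightarrow> (nat \<Rightarrow> nat) \<Rightarrow> (nat \<Rightarrow> nat) \<Rightarrow> complex" where
  "Cl d k \<rho> m m' = (\<Sum>j\<in>occ d (k - 1). \<Sum>i<d. \<Sum>i'<d.
       clone_iso d k m j i * \<rho> i i' * cnj (clone_iso d k m' j i'))"

end

theory Submission
  imports Defs
begin

text \<open>For a single-qudit input \<open>e\<^sub>i\<close> the multinomial product in the cloning amplitude
  \<open>\<alpha>\<^bsub>e\<^sub>i,j\<^esub>\<close> collapses to \<open>1 + j\<^sub>i\<close>, and its prefactor \<open>(k-1)! d! / (k+d-1)!\<close> is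
  \<open>1 / binom(k+d-1, d)\<close>. Hence the partial trace over the auxiliary states \<open>R\<^sub>j\<close>, summed over
  \<open>j \<in> N(k-1)\<close>, reproduces term by term the normalized Unruh block with \<open>\<beta>\<^sub>i \<beta>\<^sub>j\<^sup>*\<close>
  replaced by \<open>\<rho>\<^sub>i\<^sub>j\<close>. The identity is linear in \<open>\<rho>\<close>.\<close>

lemma fact_ratio_eq_inverse_binomial:
  assumes "k \<ge> 1"
  shows "fact (k - 1) * fact d / fact (k + d - 1) = 1 / real ((k + d - 1) choose d)"
proof -
  have "real ((k + d - 1) choose d) = fact (k + d - 1) / (fact d * fact (k + d - 1 - d))"
    using assms by (intro binomial_fact) simp
  moreover have "k + d - 1 - d = k - 1"
    using assms by simp
  ultimately show ?thesis
    by (simp add: mult.commute)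
qed

lemma alpha_unit_occ:
  assumes "i < d" and "k \<ge> 1"
  shows "alpha d k (unit_occ i) j = sqrt (real (1 + j i) / real ((k + d - 1) choose d))"
proof -
  have "(\<Prod>l\<in>{0..<d}. fact (unit_occ i l + j l) / (fact (unit_occ i l) * fact (j l)) :: real)
      = (\<Prod>l\<in>{0..<d}. if l = i then real (1 + j i) else 1)"
    by (rule prod.cong) (auto simp: unit_occ_def)
  also have "\<dots> = real (1 + j i)"
    using assms(1) by (simp add: prod.delta)
  finally show ?thesis
    unfolding alpha_def fact_ratio_eq_inverse_binomial[OF assms(2)]
    by (simp flip: real_sqrt_mult)
qed

lemma clone_iso_unit_occ:
  assumes "i < d" and "k \<ge> 1"
  shows "clone_iso d k m j i =
    (if m = add_occ j (unit_occ i)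
     then complex_of_real (sqrt (real (1 + j i) / real ((k + d - 1) choose d))) else 0)"
  using assms by (simp add: clone_iso_def alpha_unit_occ add_occ_def add.commute)

lemma clone_term_eq_block_term:
  assumes "i < d" and "i' < d" and "k \<ge> 1"
  shows "clone_iso d k m j i * \<rho> i i' * cnj (clone_iso d k m' j i') =
    1 / of_nat ((k + d - 1) choose d) *
    (if m = add_occ j (unit_occ i) \<and> m' = add_occ j (unit_occ i')
     then \<rho> i i' * complex_of_real (sqrt (real (1 + j i)) * sqrt (real (1 + j i')))
     else 0)"
proof -
  define C where "C = real ((k + d - 1) choose d)"
  have "sqrt (real (1 + j i) / C) * sqrt (real (1 + j i') / C)
      = sqrt (real (1 + j i)) * sqrt (real (1 + j i')) / C"
    by (simp add: C_def real_sqrt_divide real_sqrt_mult_self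
        flip: real_sqrt_mult times_divide_times_eq)
  then have "complex_of_real (sqrt (real (1 + j i) / C)) * \<rho> i i'
        * complex_of_real (sqrt (real (1 + j i') / C))
      = 1 / complex_of_real C
        * (\<rho> i i' * complex_of_real (sqrt (real (1 + j i)) * sqrt (real (1 + j i'))))"
    by (simp add: field_simps flip: of_real_mult of_real_divide)
  then show ?thesis
    using assms by (simp add: clone_iso_unit_occ C_def)
qed

lemma Bk_eq_Cl:
  assumes "k \<ge> 1"
  shows "Bk d k \<rho> m m' = Cl d k \<rho> m m'"
  unfolding Bk_def Cl_def
  by (simp add: clone_term_eq_block_term[OF _ _ assms] sum_distrib_left)

lemma Bk_pure_state:
  "Bk d k (\<lambda>i j. \<beta> i * cnj (\<beta> j)) m m' = sigmaB d k \<beta> m m' / of_nat ((k + d - 1) choose d)"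
proof -
  have "sigmaB d k \<beta> m m' = (\<Sum>n\<in>occ d (k - 1). \<Sum>i<d. \<Sum>j<d.
        (if m = add_occ n (unit_occ i) \<and> m' = add_occ n (unit_occ j)
         then \<beta> i * cnj (\<beta> j) * complex_of_real (sqrt (real (1 + n i)) * sqrt (real (1 + n j)))
         else 0))"
    unfolding sigmaB_def vvec_def cnj_sum sum_product
    by (intro sum.cong refl) (simp add: algebra_simps)
  then show ?thesis
    unfolding Bk_def by simp
qed

theorem lemma1:
  fixes d k :: nat
  assumes "d \<ge> 2" and "k \<ge> 1"
  shows "(\<forall>\<beta> :: nat \<Rightarrow> complex. (\<Sum>i<d. (cmod (\<beta> i))\<^sup>2) = 1 \<longrightarrow>
            (\<forall>m\<in>occ d k. \<forall>m'\<in>occ d k.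
               Bk d k (\<lambda>i j. \<beta> i * cnj (\<beta> j)) m m'
                 = sigmaB d k \<beta> m m' / of_nat ((k + d - 1) choose d)))
       \<and> (\<forall>\<rho>. density_op d \<rho> \<longrightarrow>
            (\<forall>m\<in>occ d k. \<forall>m'\<in>occ d k. Bk d k \<rho> m m' = Cl d k \<rho> m m'))"
  using Bk_pure_state Bk_eq_Cl[OF assms(2)] by blast

end
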